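(* Let $S=\{1,2\}$ and $N=\{1,\ldots,n\}$, and identify each belief with the probability it assigns to state $1$. Given individual beliefs $p_1,\ldots,p_n\in[0,1]$, the parimutuel equilibrium price (identified with the price/probability of state 1) of the parimutuel market with equal wealth is \[\mathrm{med}\Big(p_1,\ldots,p_n,\tfrac{1}{n},\tfrac{2}{n},\ldots,\tfrac{n-1}{n}\Big).\]
   Context: For an odd number $m$ of reals $x_1,\ldots,x_m$, $\mathrm{med}(x_1,\ldots,x_m)$ is the value $x^*$ among them with $|\{i:x_i<x^*\}|\le\frac{m-1}{2}$ and $|\{i:x_i>x^*\}|\le\frac{m-1}{2}$. The parimutuel market has consumers $i\in N$, each with consumption set $\mathbb{R}^S_+$ and linear utility $x\mapsto p_i\cdot x$ (where $p_i$ is identified with the vector $(p_i,1-p_i)$). A parimutuel equilibrium with equal wealth is a pair $(\rho,\mathbf{x})$ with $\rho\in\Delta(S)$ and $\mathbf{x}=(x_1,\ldots,x_n)\in(\mathbb{R}^S_+)^N$ such that (1) for each $i$, $\rho\cdot x_i\le 1/n$ and $p_i\cdot x_i\ge p_i\cdot y$ for every $y\in\mathbb{R}^S_+$ with $\rho\cdot y\le 1/n$; and (2) $\sum_i x_i=(1,1)$. The parimutuel price is the $\rho$ of such an equilibrium. *)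

theory Defs
  imports Main Complex_Main
begin

text \<open>Vectors in R^S with S = {1,2} are represented as pairs (state 1, state 2).\<close>

definition dotp :: "real \<times> real \<Rightarrow> real \<times> real \<Rightarrow> real" where
  "dotp a b = fst a * fst b + snd a * snd b"

definition nonneg2 :: "real \<times> real \<Rightarrow> bool" where
  "nonneg2 a \<longleftrightarrow> fst a \<ge> 0 \<and> snd a \<ge> 0"

definition is_med :: "real list \<Rightarrow> real \<Rightarrow> bool" where
  "is_med xs v \<longleftrightarrow> v \<in> set xs
     \<and> card {i. i < length xs \<and> xs ! i < v} \<le> (length xs - 1) div 2
     \<and> card {i. i < length xs \<and> xs ! i > v} \<le> (length xs - 1) div 2"

definition med :: "real list \<Rightarrow> real" where
  "med xs = (THE v. is_med xs v)"

definition parimutuel_eq ::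
  "nat \<Rightarrow> (nat \<Rightarrow> real) \<Rightarrow> real \<times> real \<Rightarrow> (nat \<Rightarrow> real \<times> real) \<Rightarrow> bool" where
  "parimutuel_eq n p \<rho> x \<longleftrightarrow>
     nonneg2 \<rho> \<and> fst \<rho> + snd \<rho> = 1
     \<and> (\<forall>i\<in>{1..n}. nonneg2 (x i) \<and> dotp \<rho> (x i) \<le> 1 / real n
          \<and> (\<forall>y. nonneg2 y \<and> dotp \<rho> y \<le> 1 / real n
                 \<longrightarrow> dotp (p i, 1 - p i) y \<le> dotp (p i, 1 - p i) (x i)))
     \<and> (\<Sum>i=1..n. fst (x i)) = 1 \<and> (\<Sum>i=1..n. snd (x i)) = 1"

end

theory Submission
  imports Defs
begin

text \<open>At price r for state 1, a consumer whose belief exceeds r spends the whole budget 1/n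
  on state 1, one whose belief is below r spends it on state 2, and one whose belief equals r
  is indifferent between all bundles exhausting the budget. With a optimists and b pessimists,
  the markets can clear iff the optimists' demand a/(nr) and the pessimists' demand b/(n(1-r))
  do not exceed the unit supply, the indifferent consumers absorbing the rest. Counting the grid
  points k/n on either side of r shows that a \<le> nr and b \<le> n(1-r) say exactly that r is a
  median of the beliefs padded by 1/n, ..., (n-1)/n, a list of odd length 2n-1 whose median
  exists and is unique.\<close>

lemma is_med_iff_filter:
  "is_med xs v \<longleftrightarrow> v \<in> set xs
     \<and> length (filter (\<lambda>x. x < v) xs) \<le> (length xs - 1) div 2
     \<and> length (filter (\<lambda>x. v < x) xs) \<le> (length xs - 1) div 2"
  by (simp add: is_med_def length_filter_conv_card)

lemma is_med_sort [simp]: "is_med (sort xs) v \<longleftrightarrow> is_med xs v"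
  by (simp add: is_med_iff_filter filter_sort)

lemma is_med_sorted_nth:
  assumes "sorted xs" "length xs = 2 * k + 1"
  shows "is_med xs (xs ! k)"
proof -
  have "{i. i < length xs \<and> xs ! i < xs ! k} \<subseteq> {..<k}"
    using sorted_nth_mono[OF assms(1), of k] by (auto simp: not_less[symmetric])
  then have below: "card {i. i < length xs \<and> xs ! i < xs ! k} \<le> k"
    using card_mono[of "{..<k}"] by fastforce
  have "{i. i < length xs \<and> xs ! k < xs ! i} \<subseteq> {k<..<2 * k + 1}"
    using sorted_nth_mono[OF assms(1)] assms(2) by (fastforce simp: not_less[symmetric])
  then have above: "card {i. i < length xs \<and> xs ! k < xs ! i} \<le> k"
    using card_mono[of "{k<..<2 * k + 1}"] by fastforce
  show ?thesis
    using below above assms(2) by (simp add: is_med_def)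
qed

lemma is_med_unique:
  assumes "odd (length xs)" "is_med xs v" "is_med xs w"
  shows "v = w"
proof -
  have False if "is_med xs v" "is_med xs w" "v < w" for v w
  proof -
    have "length xs \<le> length (filter (\<lambda>x. v < x) xs) + length (filter (\<lambda>x. x < w) xs)"
      using \<open>v < w\<close> by (induction xs) auto
    also have "\<dots> \<le> (length xs - 1) div 2 + (length xs - 1) div 2"
      using that unfolding is_med_iff_filter by (intro add_mono) auto
    finally show False
      using \<open>odd (length xs)\<close> by (auto elim: oddE)
  qed
  then show ?thesis
    using assms(2,3) by (meson linorder_neqE)
qed

lemma med_eqI: "odd (length xs) \<Longrightarrow> is_med xs v \<Longrightarrow> med xs = v"
  unfolding med_def by (rule the_equality) (auto intro: is_med_unique)

lemma ex_is_med: "odd (length xs) \<Longrightarrow> \<exists>v. is_med xs v"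
  by (metis oddE is_med_sort is_med_sorted_nth length_sort sorted_sort)

lemma length_filter_upt: "length (filter P [a..<b]) = card {k\<in>{a..<b}. P k}"
  by (simp add: distinct_length_filter Int_def conj_commute)

lemma card_Collect_atLeastAtMost_le: "card {i\<in>{1..n}. P i} \<le> n"
  by (rule order_trans[OF card_mono[of "{1..n}"]]) auto

lemma sum_if_trichotomy:
  fixes f :: "'a \<Rightarrow> 'b :: linorder" and \<alpha> \<beta> \<gamma> :: "'c :: comm_semiring_1"
  assumes "finite I"
  shows "(\<Sum>i\<in>I. if r < f i then \<alpha> else if f i < r then \<beta> else \<gamma>)
    = of_nat (card {i\<in>I. r < f i}) * \<alpha> + of_nat (card {i\<in>I. f i < r}) * \<beta>
      + of_nat (card {i\<in>I. f i = r}) * \<gamma>"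
proof -
  have "(if r < f i then \<alpha> else if f i < r then \<beta> else \<gamma>)
      = (if r < f i then \<alpha> else 0) + (if f i < r then \<beta> else 0) + (if f i = r then \<gamma> else 0)" for i
    by auto
  then show ?thesis
    using assms by (simp add: sum.distrib sum.inter_filter[symmetric])
qed

lemma card_trichotomy:
  fixes f :: "'a \<Rightarrow> 'b :: linorder"
  assumes "finite I"
  shows "card {i\<in>I. r < f i} + card {i\<in>I. f i < r} + card {i\<in>I. f i = r} = card I"
  using sum_if_trichotomy[OF assms, of r f "1 :: nat" 1 1] unfolding if_cancel by simp

definition optimal_bundle :: "real \<Rightarrow> real \<Rightarrow> real \<Rightarrow> real \<times> real \<Rightarrow> bool" where
  "optimal_bundle q r c x \<longleftrightarrow> nonneg2 x \<and> dotp (r, 1 - r) x \<le> c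
     \<and> (\<forall>y. nonneg2 y \<and> dotp (r, 1 - r) y \<le> c \<longrightarrow> dotp (q, 1 - q) y \<le> dotp (q, 1 - q) x)"

lemma optimal_bundle_iff:
  "optimal_bundle q r c (u, w) \<longleftrightarrow> 0 \<le> u \<and> 0 \<le> w \<and> r * u + (1 - r) * w \<le> c
     \<and> (\<forall>y1 y2. 0 \<le> y1 \<longrightarrow> 0 \<le> y2 \<longrightarrow> r * y1 + (1 - r) * y2 \<le> c
          \<longrightarrow> q * y1 + (1 - q) * y2 \<le> q * u + (1 - q) * w)"
  by (auto simp: optimal_bundle_def nonneg2_def dotp_def)

lemma optimal_bundle_swap:
  "optimal_bundle q r c (u, w) \<longleftrightarrow> optimal_bundle (1 - q) (1 - r) c (w, u)"
  unfolding optimal_bundle_iff by (auto simp: algebra_simps)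

lemma optimal_bundle_optimist:
  assumes "0 \<le> r" "r < q" "q \<le> 1" "0 < c" and opt: "optimal_bundle q r c (u, w)"
  shows "0 < r \<and> c \<le> r * u"
proof -
  let ?U = "q * u + (1 - q) * w"
  have u: "0 \<le> u" "0 \<le> w" "r * u + (1 - r) * w \<le> c"
    and best: "\<And>y1 y2. 0 \<le> y1 \<Longrightarrow> 0 \<le> y2 \<Longrightarrow> r * y1 + (1 - r) * y2 \<le> c \<Longrightarrow> q * y1 + (1 - q) * y2 \<le> ?U"
    using opt unfolding optimal_bundle_iff by auto
  have "0 < q" using assms by linarith
  have "0 < r"
  proof (rule ccontr)
    assume "\<not> 0 < r"
    \<comment> \<open>then state 1 is free, and betting ever more on it beats the optimum\<close>
    then have "q * ((?U + 1) / q) + (1 - q) * 0 \<le> ?U"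
      using best[of "(?U + 1) / q" 0] \<open>0 \<le> r\<close> \<open>0 < q\<close> \<open>0 < c\<close> u \<open>q \<le> 1\<close> by simp
    then show False using \<open>0 < q\<close> by simp
  qed
  have "q * (c / r) + (1 - q) * 0 \<le> ?U"
    using best[of "c / r" 0] \<open>0 < r\<close> \<open>0 < c\<close> by simp
  then have "q * c \<le> r * ?U"
    using \<open>0 < r\<close> by (simp add: field_simps)
  moreover have "q * (r * u + (1 - r) * w) \<le> q * c"
    using u(3) \<open>0 < q\<close> by simp
  ultimately have "(q - r) * w \<le> 0"
    by (simp add: algebra_simps)
  then have "w = 0"
    using u(2) \<open>r < q\<close> by (simp add: mult_le_0_iff)
  then show ?thesis
    using \<open>q * c \<le> r * ?U\<close> \<open>0 < q\<close> \<open>0 < r\<close> by (simp add: mult.left_commute)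
qed

lemma optimal_bundle_pessimist:
  assumes "r \<le> 1" "q < r" "0 \<le> q" "0 < c" "optimal_bundle q r c (u, w)"
  shows "r < 1 \<and> c \<le> (1 - r) * w"
  using optimal_bundle_optimist[of "1 - r" "1 - q" c w u] assms optimal_bundle_swap by auto

lemma optimal_bundle_bet_first:
  assumes "0 < r" "r < q" "0 \<le> c"
  shows "optimal_bundle q r c (c / r, 0)"
  unfolding optimal_bundle_iff
proof (intro conjI allI impI)
  fix y1 y2 :: real
  assume y: "0 \<le> y1" "0 \<le> y2" "r * y1 + (1 - r) * y2 \<le> c"
  have "r * (q * y1 + (1 - q) * y2) \<le> q * (r * y1 + (1 - r) * y2)"
    using assms y(2) by (simp add: algebra_simps mult_right_mono)
  also have "\<dots> \<le> q * c"
    using assms y(3) by simp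
  finally show "q * y1 + (1 - q) * y2 \<le> q * (c / r) + (1 - q) * 0"
    using assms(1) by (simp add: field_simps)
qed (use assms in auto)

lemma optimal_bundle_bet_second:
  assumes "r < 1" "q < r" "0 \<le> c"
  shows "optimal_bundle q r c (0, c / (1 - r))"
  using optimal_bundle_bet_first[of "1 - r" "1 - q" c] assms optimal_bundle_swap by auto

lemma optimal_bundle_indifferent:
  "0 \<le> u \<Longrightarrow> 0 \<le> w \<Longrightarrow> r * u + (1 - r) * w = c \<Longrightarrow> optimal_bundle r r c (u, w)"
  unfolding optimal_bundle_iff by auto

lemma parimutuel_eq_iff:
  "parimutuel_eq n p (r, s) x \<longleftrightarrow> s = 1 - r \<and> 0 \<le> r \<and> r \<le> 1
     \<and> (\<forall>i\<in>{1..n}. optimal_bundle (p i) r (1 / real n) (x i))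
     \<and> (\<Sum>i=1..n. fst (x i)) = 1 \<and> (\<Sum>i=1..n. snd (x i)) = 1"
  unfolding parimutuel_eq_def optimal_bundle_def nonneg2_def by (cases "s = 1 - r") auto

definition balanced_price :: "nat \<Rightarrow> (nat \<Rightarrow> real) \<Rightarrow> real \<Rightarrow> bool" where
  "balanced_price n p r \<longleftrightarrow> 0 \<le> r \<and> r \<le> 1
     \<and> real (card {i\<in>{1..n}. r < p i}) \<le> real n * r
     \<and> real (card {i\<in>{1..n}. p i < r}) \<le> real n * (1 - r)"

lemma parimutuel_eq_balanced_price:
  assumes "1 \<le> n" "\<forall>i\<in>{1..n}. 0 \<le> p i \<and> p i \<le> 1" "parimutuel_eq n p (r, s) x"
  shows "balanced_price n p r"
proof -
  define c where "c = 1 / real n"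
  have "0 < c" using assms(1) by (simp add: c_def)
  have r: "0 \<le> r" "r \<le> 1"
    and opt: "\<And>i. i \<in> {1..n} \<Longrightarrow> optimal_bundle (p i) r c (x i)"
    and sums: "(\<Sum>i=1..n. fst (x i)) = 1" "(\<Sum>i=1..n. snd (x i)) = 1"
    using assms(3) by (auto simp: parimutuel_eq_iff c_def)
  have x_nonneg: "0 \<le> fst (x i)" "0 \<le> snd (x i)" if "i \<in> {1..n}" for i
    using opt[OF that] by (auto simp: optimal_bundle_def nonneg2_def)
  have "real (card {i\<in>{1..n}. r < p i}) * c \<le> (\<Sum>i\<in>{i\<in>{1..n}. r < p i}. r * fst (x i))"
    using optimal_bundle_optimist[of r _ c] opt assms(2) r \<open>0 < c\<close>
    by (intro sum_bounded_below) (metis (no_types, lifting) mem_Collect_eq prod.collapse)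
  also have "\<dots> \<le> (\<Sum>i=1..n. r * fst (x i))"
    using x_nonneg r by (intro sum_mono2) auto
  also have "\<dots> = r"
    using sums by (simp add: sum_distrib_left[symmetric])
  finally have optimists: "real (card {i\<in>{1..n}. r < p i}) \<le> real n * r"
    using assms(1) by (simp add: c_def field_simps)
  have "real (card {i\<in>{1..n}. p i < r}) * c \<le> (\<Sum>i\<in>{i\<in>{1..n}. p i < r}. (1 - r) * snd (x i))"
    using optimal_bundle_pessimist[of r _ c] opt assms(2) r \<open>0 < c\<close>
    by (intro sum_bounded_below) (metis (no_types, lifting) mem_Collect_eq prod.collapse)
  also have "\<dots> \<le> (\<Sum>i=1..n. (1 - r) * snd (x i))"
    using x_nonneg r by (intro sum_mono2) auto
  also have "\<dots> = 1 - r"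
    using sums by (simp add: sum_distrib_left[symmetric])
  finally have pessimists: "real (card {i\<in>{1..n}. p i < r}) \<le> real n * (1 - r)"
    using assms(1) by (simp add: c_def field_simps)
  show ?thesis
    using r optimists pessimists by (simp add: balanced_price_def)
qed

lemma balanced_price_optimist:
  assumes "balanced_price n p r" "i \<in> {1..n}" "r < p i"
  shows "0 < r"
proof -
  have "0 < real (card {i\<in>{1..n}. r < p i})"
    using assms(2,3) by (auto simp: card_gt_0_iff)
  then have "0 < real n * r"
    using assms(1) unfolding balanced_price_def by linarith
  then show ?thesis by (simp add: zero_less_mult_iff)
qed

lemma balanced_price_pessimist:
  assumes "balanced_price n p r" "i \<in> {1..n}" "p i < r"
  shows "r < 1"
proof -
  have "0 < real (card {i\<in>{1..n}. p i < r})"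
    using assms(2,3) by (auto simp: card_gt_0_iff)
  then have "0 < real n * (1 - r)"
    using assms(1) unfolding balanced_price_def by linarith
  then show ?thesis by (simp add: zero_less_mult_iff)
qed

lemma balanced_price_extreme:
  assumes "balanced_price n p r" "\<forall>i\<in>{1..n}. 0 \<le> p i \<and> p i \<le> 1" "r = 0 \<or> r = 1" "i \<in> {1..n}"
  shows "p i = r"
  using assms balanced_price_optimist[OF assms(1,4)] balanced_price_pessimist[OF assms(1,4)]
  by fastforce

lemma balanced_price_no_tie:
  assumes "balanced_price n p r" "\<forall>i\<in>{1..n}. p i \<noteq> r"
  shows "real (card {i\<in>{1..n}. r < p i}) = real n * r"
    and "real (card {i\<in>{1..n}. p i < r}) = real n * (1 - r)"
proof -
  have no_tie: "{i\<in>{1..n}. p i = r} = {}" using assms(2) by auto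
  have "card {i\<in>{1..n}. r < p i} + card {i\<in>{1..n}. p i < r} = n"
    using card_trichotomy[of "{1..n}" r p] unfolding no_tie by simp
  then have "real (card {i\<in>{1..n}. r < p i}) + real (card {i\<in>{1..n}. p i < r}) = real n"
    by (simp flip: of_nat_add)
  then show "real (card {i\<in>{1..n}. r < p i}) = real n * r"
    and "real (card {i\<in>{1..n}. p i < r}) = real n * (1 - r)"
    using assms(1) unfolding balanced_price_def by (simp_all add: algebra_simps)
qed

text \<open>(u, w) is the bundle of each consumer whose belief equals r: these consumers share
  equally what the optimists and the pessimists leave of the unit supplies.\<close>

lemma balanced_price_leftover:
  assumes n: "1 \<le> n" and p: "\<forall>i\<in>{1..n}. 0 \<le> p i \<and> p i \<le> 1" and bal: "balanced_price n p r"
  defines "a \<equiv> real (card {i\<in>{1..n}. r < p i})" and "b \<equiv> real (card {i\<in>{1..n}. p i < r})"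
    and "e \<equiv> real (card {i\<in>{1..n}. p i = r})"
  shows "\<exists>u w. 0 \<le> u \<and> 0 \<le> w \<and> a / (real n * r) + e * u = 1 \<and> b / (real n * (1 - r)) + e * w = 1
    \<and> (0 < e \<longrightarrow> r * u + (1 - r) * w = 1 / real n)"
proof (cases "e = 0")
  case True
  then have no_tie: "\<forall>i\<in>{1..n}. p i \<noteq> r" by (auto simp: e_def)
  then have "r \<noteq> 0" "r \<noteq> 1"
    using balanced_price_extreme[OF bal p] n by fastforce+
  then show ?thesis
    using balanced_price_no_tie[OF bal no_tie] n True by (auto simp: a_def b_def)
next
  case False
  have r: "0 \<le> r" "r \<le> 1" and a_le: "a \<le> real n * r" and b_le: "b \<le> real n * (1 - r)"
    using bal by (auto simp: balanced_price_def a_def b_def)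
  have "r = 0 \<Longrightarrow> a = 0" "r = 1 \<Longrightarrow> b = 0"
    using balanced_price_extreme[OF bal p] by (auto simp: a_def b_def)
  moreover have "0 < real n" using n by simp
  ultimately have shares: "a / (real n * r) \<le> 1 \<and> r * (a / (real n * r)) = a / real n"
    "b / (real n * (1 - r)) \<le> 1 \<and> (1 - r) * (b / (real n * (1 - r))) = b / real n"
    using r a_le b_le by (auto simp: divide_le_eq_1 mult_pos_pos)
  have "r * (1 - a / (real n * r)) + (1 - r) * (1 - b / (real n * (1 - r)))
      = 1 - r * (a / (real n * r)) - (1 - r) * (b / (real n * (1 - r)))"
    by (simp only: right_diff_distrib mult_1_right)
  also have "\<dots> = (real n - a - b) / real n"
    using shares n by (simp add: diff_divide_distrib)
  also have "real n - a - b = e"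
    using card_trichotomy[of "{1..n}" r p] unfolding a_def b_def e_def by (simp flip: of_nat_add)
  finally have spent: "r * (1 - a / (real n * r)) + (1 - r) * (1 - b / (real n * (1 - r))) = e / real n" .
  define u where "u = (1 - a / (real n * r)) / e"
  define w where "w = (1 - b / (real n * (1 - r))) / e"
  have "0 \<le> u" "0 \<le> w"
    using shares by (simp_all add: u_def w_def e_def)
  moreover have "a / (real n * r) + e * u = 1" "b / (real n * (1 - r)) + e * w = 1"
    using False by (simp_all add: u_def w_def)
  moreover have "r * u + (1 - r) * w = 1 / real n"
    using spent False by (simp add: u_def w_def add_divide_distrib[symmetric])
  ultimately show ?thesis by blast
qed

lemma balanced_price_parimutuel_eq:
  assumes n: "1 \<le> n" and p: "\<forall>i\<in>{1..n}. 0 \<le> p i \<and> p i \<le> 1" and bal: "balanced_price n p r"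
  shows "\<exists>x. parimutuel_eq n p (r, 1 - r) x"
proof -
  define c where "c = 1 / real n"
  define a where "a = real (card {i\<in>{1..n}. r < p i})"
  define b where "b = real (card {i\<in>{1..n}. p i < r})"
  define e where "e = real (card {i\<in>{1..n}. p i = r})"
  obtain u w where uw: "0 \<le> u" "0 \<le> w" and sum_u: "a * (c / r) + e * u = 1"
    and sum_w: "b * (c / (1 - r)) + e * w = 1" and budget: "0 < e \<Longrightarrow> r * u + (1 - r) * w = c"
    using balanced_price_leftover[OF assms] unfolding a_def b_def e_def c_def by auto
  have "0 < c" using n by (simp add: c_def)
  define x where "x i = (if r < p i then (c / r, 0) else if p i < r then (0, c / (1 - r)) else (u, w))" for i
  have "(\<Sum>i=1..n. fst (x i)) = a * (c / r) + b * 0 + e * u"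
    unfolding x_def a_def b_def e_def
    by (simp only: if_distrib[of fst] fst_conv sum_if_trichotomy[OF finite_atLeastAtMost])
  then have sum_fst: "(\<Sum>i=1..n. fst (x i)) = 1" using sum_u by simp
  have "(\<Sum>i=1..n. snd (x i)) = a * 0 + b * (c / (1 - r)) + e * w"
    unfolding x_def a_def b_def e_def
    by (simp only: if_distrib[of snd] snd_conv sum_if_trichotomy[OF finite_atLeastAtMost])
  then have sum_snd: "(\<Sum>i=1..n. snd (x i)) = 1" using sum_w by simp
  have "optimal_bundle (p i) r c (x i)" if "i \<in> {1..n}" for i
  proof (cases rule: linorder_cases[of r "p i"])
    case less
    then show ?thesis
      using balanced_price_optimist[OF bal that] \<open>0 < c\<close> optimal_bundle_bet_first by (simp add: x_def)
  next
    case greater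
    then show ?thesis
      using balanced_price_pessimist[OF bal that] \<open>0 < c\<close> optimal_bundle_bet_second by (simp add: x_def)
  next
    case equal
    then have "0 < e" using that by (auto simp: e_def card_gt_0_iff)
    then show ?thesis
      using equal uw budget optimal_bundle_indifferent by (simp add: x_def)
  qed
  moreover have "0 \<le> r" "r \<le> 1"
    using bal by (simp_all add: balanced_price_def)
  ultimately have "parimutuel_eq n p (r, 1 - r) x"
    using sum_fst sum_snd by (simp add: parimutuel_eq_iff c_def)
  then show ?thesis by blast
qed

definition padded_beliefs :: "nat \<Rightarrow> (nat \<Rightarrow> real) \<Rightarrow> real list" where
  "padded_beliefs n p = map p [1..<n+1] @ map (\<lambda>k. real k / real n) [1..<n]"

lemma is_med_padded_beliefs_iff:
  assumes "1 \<le> n"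
  shows "is_med (padded_beliefs n p) r \<longleftrightarrow> r \<in> set (padded_beliefs n p)
    \<and> card {i\<in>{1..n}. p i < r} + card {k\<in>{1..<n}. real k < real n * r} \<le> n - 1
    \<and> card {i\<in>{1..n}. r < p i} + card {k\<in>{1..<n}. real n * r < real k} \<le> n - 1"
proof -
  have half_length: "(length (padded_beliefs n p) - 1) div 2 = n - 1"
    using assms by (simp add: padded_beliefs_def)
  have count: "length (filter P (padded_beliefs n p))
      = card {i\<in>{1..n}. P (p i)} + card {k\<in>{1..<n}. P (real k / real n)}" for P
  proof -
    have "{1..<n+1} = {1..n}" by auto
    then show ?thesis
      by (simp only: padded_beliefs_def filter_append length_append filter_map length_map
          length_filter_upt o_def)
  qed
  have "real k / real n < r \<longleftrightarrow> real k < real n * r" "r < real k / real n \<longleftrightarrow> real n * r < real k" for k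
    using assms by (simp_all add: field_simps)
  then show ?thesis
    unfolding is_med_iff_filter half_length count by simp
qed

lemma card_grid_below_le: "t \<le> real j \<Longrightarrow> card {k\<in>{1..<n}. real k < t} \<le> j - 1"
  by (rule order_trans[OF card_mono[of "{1..<j}"]]) auto

lemma card_grid_above_le: "real j \<le> t \<Longrightarrow> card {k\<in>{1..<n}. t < real k} \<le> n - 1 - j"
  by (rule order_trans[OF card_mono[of "{j+1..<n}"]]) auto

lemma card_grid_below_ge: "real j < t \<Longrightarrow> t \<le> real n \<Longrightarrow> j \<le> card {k\<in>{1..<n}. real k < t}"
  by (rule order_trans[OF _ card_mono[of _ "{1..j}"]]) auto

lemma card_grid_above_ge: "t < real j \<Longrightarrow> 0 \<le> t \<Longrightarrow> n - j \<le> card {k\<in>{1..<n}. t < real k}"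
  by (rule order_trans[OF _ card_mono[of _ "{j..<n}"]]) auto

lemma balanced_price_card_less:
  assumes n: "1 \<le> n" and p: "\<forall>i\<in>{1..n}. 0 \<le> p i \<and> p i \<le> 1" and bal: "balanced_price n p r"
  shows "card {i\<in>{1..n}. r < p i} < n" and "card {i\<in>{1..n}. p i < r} < n"
proof -
  have r: "0 \<le> r" "r \<le> 1" using bal by (simp_all add: balanced_price_def)
  show "card {i\<in>{1..n}. r < p i} < n"
  proof (rule ccontr)
    assume all: "\<not> card {i\<in>{1..n}. r < p i} < n"
    then have "real n \<le> real n * r"
      using bal unfolding balanced_price_def by linarith
    then have "r = 1"
      using r n by (simp add: mult_le_cancel_left1)
    then have none: "{i\<in>{1..n}. r < p i} = {}"
      using balanced_price_extreme[OF bal p] by auto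
    show False using all n unfolding none by simp
  qed
  show "card {i\<in>{1..n}. p i < r} < n"
  proof (rule ccontr)
    assume all: "\<not> card {i\<in>{1..n}. p i < r} < n"
    then have "real n \<le> real n * (1 - r)"
      using bal unfolding balanced_price_def by linarith
    then have "r = 0"
      using r n by (simp add: mult_le_cancel_left1)
    then have none: "{i\<in>{1..n}. p i < r} = {}"
      using balanced_price_extreme[OF bal p] by auto
    show False using all n unfolding none by simp
  qed
qed

lemma balanced_price_in_padded_beliefs:
  assumes n: "1 \<le> n" and p: "\<forall>i\<in>{1..n}. 0 \<le> p i \<and> p i \<le> 1" and bal: "balanced_price n p r"
  shows "r \<in> set (padded_beliefs n p)"
proof (cases "\<exists>i\<in>{1..n}. p i = r")
  case True
  then show ?thesis by (force simp: padded_beliefs_def)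
next
  case False
  define a where "a = card {i\<in>{1..n}. r < p i}"
  have "real a = real n * r"
    using balanced_price_no_tie(1)[OF bal] False by (auto simp: a_def)
  then have r: "r = real a / real n"
    using n by (simp add: field_simps)
  have "a \<noteq> 0"
  proof
    assume "a = 0"
    then have "p 1 = r"
      using balanced_price_extreme[OF bal p] r n by simp
    then show False using False n by auto
  qed
  moreover have "a < n"
    using balanced_price_card_less(1)[OF assms] by (simp add: a_def)
  ultimately show ?thesis
    using r by (force simp: padded_beliefs_def)
qed

lemma balanced_price_is_med:
  assumes n: "1 \<le> n" and p: "\<forall>i\<in>{1..n}. 0 \<le> p i \<and> p i \<le> 1" and bal: "balanced_price n p r"
  shows "is_med (padded_beliefs n p) r"
proof -
  define a where "a = card {i\<in>{1..n}. r < p i}"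
  define b where "b = card {i\<in>{1..n}. p i < r}"
  have "real a \<le> real n * r" "real b \<le> real n * (1 - r)"
    using bal by (auto simp: balanced_price_def a_def b_def)
  moreover have "a < n" "b < n"
    using balanced_price_card_less[OF assms] by (simp_all add: a_def b_def)
  ultimately have "b + card {k\<in>{1..<n}. real k < real n * r} \<le> n - 1"
    and "a + card {k\<in>{1..<n}. real n * r < real k} \<le> n - 1"
    using card_grid_below_le[of "real n * r" "n - b" n] card_grid_above_le[of a "real n * r" n]
    by (simp_all add: algebra_simps)
  then show ?thesis
    using balanced_price_in_padded_beliefs[OF assms] n
    by (simp add: is_med_padded_beliefs_iff a_def b_def)
qed

lemma is_med_balanced_price:
  assumes n: "1 \<le> n" and p: "\<forall>i\<in>{1..n}. 0 \<le> p i \<and> p i \<le> 1"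
    and med: "is_med (padded_beliefs n p) r"
  shows "balanced_price n p r"
proof -
  define a where "a = card {i\<in>{1..n}. r < p i}"
  define b where "b = card {i\<in>{1..n}. p i < r}"
  have mem: "r \<in> set (padded_beliefs n p)"
    and below: "b + card {k\<in>{1..<n}. real k < real n * r} \<le> n - 1"
    and above: "a + card {k\<in>{1..<n}. real n * r < real k} \<le> n - 1"
    using med n by (simp_all add: is_med_padded_beliefs_iff a_def b_def)
  have r: "0 \<le> r" "r \<le> 1"
    using mem p by (auto simp: padded_beliefs_def)
  have "a \<le> n" "b \<le> n"
    unfolding a_def b_def by (rule card_Collect_atLeastAtMost_le)+
  have "real a \<le> real n * r"
  proof (rule ccontr)
    assume "\<not> ?thesis"
    then have "n - a \<le> card {k\<in>{1..<n}. real n * r < real k}"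
      using card_grid_above_ge[of "real n * r" a n] r by simp
    then show False using above \<open>a \<le> n\<close> n by linarith
  qed
  moreover have "real b \<le> real n * (1 - r)"
  proof (rule ccontr)
    assume "\<not> ?thesis"
    moreover have "real n * r \<le> real n"
      using r by (simp add: mult_left_le)
    ultimately have "n - b \<le> card {k\<in>{1..<n}. real k < real n * r}"
      using card_grid_below_ge[of "n - b" "real n * r" n] \<open>b \<le> n\<close> by (simp add: algebra_simps)
    then show False using below \<open>b \<le> n\<close> n by linarith
  qed
  ultimately show ?thesis
    using r by (simp add: balanced_price_def a_def b_def)
qed

theorem proposition4:
  fixes n :: nat and p :: "nat \<Rightarrow> real"
  assumes "n \<ge> 1"
    and "\<forall>i\<in>{1..n}. 0 \<le> p i \<and> p i \<le> 1"
  shows "(\<exists>\<rho> x. parimutuel_eq n p \<rho> x)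
    \<and> (\<forall>\<rho> x. parimutuel_eq n p \<rho> x \<longrightarrow>
         fst \<rho> = med (map p [1..<n+1] @ map (\<lambda>k. real k / real n) [1..<n]))"
proof -
  have odd_length: "odd (length (padded_beliefs n p))"
    using assms(1) by (simp add: padded_beliefs_def)
  then obtain m where "is_med (padded_beliefs n p) m"
    using ex_is_med by blast
  then have "\<exists>x. parimutuel_eq n p (m, 1 - m) x"
    using assms by (blast intro: balanced_price_parimutuel_eq is_med_balanced_price)
  moreover have "r = med (padded_beliefs n p)" if "parimutuel_eq n p (r, s) x" for r s x
    using that assms odd_length
    by (metis med_eqI balanced_price_is_med parimutuel_eq_balanced_price)
  ultimately show ?thesis
    unfolding padded_beliefs_def[symmetric] by (metis prod.collapse)
qed

end
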